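(* For all $n\ge1$, $$\varphi_n=2(n-1)H_n+2P_n,\qquad \theta_n=(2n-1)P_n.$$
   Context: Let $s=\sqrt3/2$. Consider the standard triangular lattice in the plane whose vertices are the points $(a+b/2,\,bs)$ with $a,b\in\mathbb Z$ and whose edges are the unit segments joining lattice points in the directions $0^\circ,60^\circ,120^\circ$; it divides the plane into unit equilateral triangles called cells. A small tile is a single cell; a large tile is an equilateral triangle of side $2$ whose vertices are lattice points (so it is a union of $4$ cells; it may point up or down). For a region $R$ that is a finite union of cells, a tiling of $R$ is a finite set of small and large tiles, each contained in $R$, with pairwise disjoint interiors and union equal to $R$. For $n\ge1$, the region $H_n$ is the union of the trapezoid with vertices $(0,0),(n,0),(n-\tfrac12,s),(\tfrac12,s)$ and the trapezoid with vertices $(\tfrac12,s),(n-\tfrac12,s),(n,2s),(0,2s)$ ($4n-2$ cells; for $n=1$ two unit triangles meeting at a point), and $P_n$ is $H_n$ with the cell with vertices $(n-1,0),(n,0),(n-\tfrac12,s)$ removed. $H_n$ and $P_n$ also denote the numbers of tilings of these regions; thus $H_n=\frac{(1+\sqrt2)^n+(1-\sqrt2)^n}{2}$ and $P_n=\frac{(1+\sqrt2)^n-(1-\sqrt2)^n}{2\sqrt2}$. Define $\varphi_n$ (resp. $\theta_n$) as the sum, over all tilings of $H_n$ (resp. $P_n$), of the number of small tiles in the tiling. *)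

theory Defs
  imports Main
begin

text \<open>Lattice coordinates: the lattice point (a,b) :: int * int is the plane point
  (a + b/2, b*sqrt 3/2).  A cell is encoded as (a, b, True) for the upward cell with
  vertices (a,b), (a+1,b), (a,b+1), and (a, b, False) for the downward cell with
  vertices (a+1,b), (a,b+1), (a+1,b+1).  Every cell arises exactly once this way.\<close>

type_synonym cell = "int \<times> int \<times> bool"

definition small_tile :: "cell \<Rightarrow> cell set" where
  "small_tile c = {c}"

text \<open>Large upward tile with vertices (a,b), (a+2,b), (a,b+2).\<close>
definition large_up :: "int \<Rightarrow> int \<Rightarrow> cell set" where
  "large_up a b = {(a,b,True), (a+1,b,True), (a,b+1,True), (a,b,False)}"

text \<open>Large downward tile with vertices (a+2,b), (a,b+2), (a+2,b+2).\<close>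
definition large_down :: "int \<Rightarrow> int \<Rightarrow> cell set" where
  "large_down a b = {(a+1,b,False), (a,b+1,False), (a+1,b+1,False), (a+1,b+1,True)}"

definition tiles :: "cell set set" where
  "tiles = range small_tile \<union> {large_up a b | a b. True} \<union> {large_down a b | a b. True}"

definition is_tiling :: "cell set \<Rightarrow> cell set set \<Rightarrow> bool" where
  "is_tiling R T \<longleftrightarrow> finite T \<and> T \<subseteq> tiles \<and> (\<forall>t\<in>T. t \<subseteq> R)
     \<and> (\<forall>t\<in>T. \<forall>u\<in>T. t \<noteq> u \<longrightarrow> t \<inter> u = {}) \<and> \<Union>T = R"

definition tilings :: "cell set \<Rightarrow> cell set set set" where
  "tilings R = {T. is_tiling R T}"

definition num_small :: "cell set set \<Rightarrow> nat" where
  "num_small T = card {t \<in> T. \<exists>c. t = small_tile c}"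

definition Hreg :: "nat \<Rightarrow> cell set" where
  "Hreg n =
     {(a,0,True) | a. 0 \<le> a \<and> a \<le> int n - 1}
   \<union> {(a,0,False) | a. 0 \<le> a \<and> a \<le> int n - 2}
   \<union> {(a,1,True) | a. 0 \<le> a \<and> a \<le> int n - 2}
   \<union> {(a,1,False) | a. -1 \<le> a \<and> a \<le> int n - 2}"

text \<open>P_n: remove the cell with vertices (n-1,0),(n,0),(n-1/2,s).\<close>
definition Preg :: "nat \<Rightarrow> cell set" where
  "Preg n = Hreg n - {(int n - 1, 0, True)}"

definition Hcount :: "nat \<Rightarrow> nat" where "Hcount n = card (tilings (Hreg n))"
definition Pcount :: "nat \<Rightarrow> nat" where "Pcount n = card (tilings (Preg n))"

definition phi :: "nat \<Rightarrow> nat" where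
  "phi n = (\<Sum>T\<in>tilings (Hreg n). num_small T)"
definition theta :: "nat \<Rightarrow> nat" where
  "theta n = (\<Sum>T\<in>tilings (Preg n). num_small T)"

end

theory Submission
  imports Defs
begin

text \<open>Fix a cell c of a region R: every tiling of R consists of the tile covering c together
  with a tiling of the rest. Summing over the possible tiles at c gives recurrences for the number
  of tilings and for the total number of small tiles; a tiling of R - {c} extended by the small
  tile {c} gains exactly one small tile, which produces the extra tiling counts in the second
  recurrence. Cutting at the last cell of the longer row closes these recurrences over H_n, P_n
  and the strip E_n obtained from H_(n+1) by deleting its last upper cell. The closed forms then
  follow by induction on n, carrying along E_(n-1) = P_n and the small-tile total (2n-1) E_(n-1)
  of E_(n-1).\<close>

definition tiling_count :: "cell set \<Rightarrow> nat" where
  "tiling_count R = card (tilings R)"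

definition small_count :: "cell set \<Rightarrow> nat" where
  "small_count R = (\<Sum>T\<in>tilings R. num_small T)"

definition tiles_covering :: "cell set \<Rightarrow> cell \<Rightarrow> cell set set" where
  "tiles_covering R c = {t\<in>tiles. c \<in> t \<and> t \<subseteq> R}"

lemma tiles_nonempty: "t \<in> tiles \<Longrightarrow> t \<noteq> {}"
  unfolding tiles_def small_tile_def large_up_def large_down_def by auto

lemma tilings_subset_Pow: "T \<in> tilings R \<Longrightarrow> T \<subseteq> Pow R"
  unfolding tilings_def is_tiling_def by auto

lemma finite_tilings: "finite R \<Longrightarrow> finite (tilings R)"
  by (rule finite_subset[of _ "Pow (Pow R)"]) (auto dest: tilings_subset_Pow)

lemma finite_tiles_covering: "finite R \<Longrightarrow> finite (tiles_covering R c)"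
  by (rule finite_subset[of _ "Pow R"]) (auto simp: tiles_covering_def)

lemma tile_notin_tiling_Diff:
  assumes "t \<in> tiles" "T \<in> tilings (R - t)"
  shows "t \<notin> T"
proof
  assume "t \<in> T"
  then have "t \<subseteq> R - t" using tilings_subset_Pow[OF assms(2)] by auto
  then show False using tiles_nonempty[OF assms(1)] by auto
qed

lemma bij_betw_insert_tiling:
  assumes "c \<in> R"
  shows "bij_betw (\<lambda>(t, T). insert t T)
           (SIGMA t:tiles_covering R c. tilings (R - t)) (tilings R)"
proof (rule bij_betwI')
  fix x y
  assume "x \<in> (SIGMA t:tiles_covering R c. tilings (R - t))"
    and "y \<in> (SIGMA t:tiles_covering R c. tilings (R - t))"
  then obtain t1 T1 t2 T2 where x: "x = (t1, T1)" "t1 \<in> tiles_covering R c" "T1 \<in> tilings (R - t1)"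
    and y: "y = (t2, T2)" "t2 \<in> tiles_covering R c" "T2 \<in> tilings (R - t2)"
    by auto
  have fresh: "t1 \<notin> T1" "t2 \<notin> T2"
    using x y tile_notin_tiling_Diff unfolding tiles_covering_def by auto
  show "((\<lambda>(t, T). insert t T) x = (\<lambda>(t, T). insert t T) y) = (x = y)"
  proof
    assume "(\<lambda>(t, T). insert t T) x = (\<lambda>(t, T). insert t T) y"
    then have eq: "insert t1 T1 = insert t2 T2" using x y by simp
    have "t1 = t2"
    proof (rule ccontr)
      assume "t1 \<noteq> t2"
      then have "t1 \<subseteq> R - t2" using eq tilings_subset_Pow[OF y(3)] by auto
      moreover have "c \<in> t1" "c \<in> t2" using x y unfolding tiles_covering_def by auto
      ultimately show False by auto
    qed
    with eq fresh have "T1 = T2" by (metis insert_ident)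
    with \<open>t1 = t2\<close> show "x = y" using x y by simp
  qed simp
next
  fix x
  assume "x \<in> (SIGMA t:tiles_covering R c. tilings (R - t))"
  then obtain t T where x: "x = (t, T)" "t \<in> tiles_covering R c" "is_tiling (R - t) T"
    unfolding tilings_def by auto
  have t: "t \<subseteq> R" "t \<in> tiles" using x(2) unfolding tiles_covering_def by auto
  from x(3) have T: "finite T" "T \<subseteq> tiles" "\<forall>u\<in>T. u \<subseteq> R - t" "\<Union>T = R - t"
    "\<forall>u\<in>T. \<forall>v\<in>T. u \<noteq> v \<longrightarrow> u \<inter> v = {}"
    unfolding is_tiling_def by auto
  have "is_tiling R (insert t T)"
    unfolding is_tiling_def
  proof (intro conjI)
    show "\<forall>u\<in>insert t T. \<forall>v\<in>insert t T. u \<noteq> v \<longrightarrow> u \<inter> v = {}"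
      using T(3,5) by blast
  qed (use t T in auto)
  then show "(\<lambda>(t, T). insert t T) x \<in> tilings R" using x(1) unfolding tilings_def by simp
next
  fix T
  assume "T \<in> tilings R"
  then have tiling: "is_tiling R T" unfolding tilings_def by simp
  then obtain t where t: "t \<in> T" "c \<in> t" using assms unfolding is_tiling_def by auto
  have "t \<in> tiles_covering R c" using tiling t unfolding is_tiling_def tiles_covering_def by auto
  moreover have "is_tiling (R - t) (T - {t})"
    unfolding is_tiling_def
  proof (intro conjI)
    show "\<forall>u\<in>T - {t}. u \<subseteq> R - t" "\<Union>(T - {t}) = R - t"
      using tiling t unfolding is_tiling_def by blast+
  qed (use tiling in \<open>auto simp: is_tiling_def\<close>)
  ultimately have "(t, T - {t}) \<in> (SIGMA t:tiles_covering R c. tilings (R - t))"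
    unfolding tilings_def by simp
  moreover have "T = (\<lambda>(t, T). insert t T) (t, T - {t})" using t by auto
  ultimately show "\<exists>x\<in>(SIGMA t:tiles_covering R c. tilings (R - t)). T = (\<lambda>(t, T). insert t T) x"
    by blast
qed

lemma tiling_count_split:
  assumes "c \<in> R" "finite R"
  shows "tiling_count R = (\<Sum>t\<in>tiles_covering R c. tiling_count (R - t))"
proof -
  have "tiling_count R = card (SIGMA t:tiles_covering R c. tilings (R - t))"
    unfolding tiling_count_def using bij_betw_same_card[OF bij_betw_insert_tiling[OF assms(1)]] by simp
  also have "\<dots> = (\<Sum>t\<in>tiles_covering R c. tiling_count (R - t))"
    using assms finite_tiles_covering finite_tilings unfolding tiling_count_def by simp
  finally show ?thesis .
qed

lemma num_small_insert:
  assumes "t \<notin> T" "finite T"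
  shows "num_small (insert t T) = num_small T + of_bool (t \<in> range small_tile)"
proof -
  have "{u \<in> insert t T. \<exists>c. u = small_tile c} =
        (if t \<in> range small_tile then insert t {u \<in> T. \<exists>c. u = small_tile c}
         else {u \<in> T. \<exists>c. u = small_tile c})"
    by auto
  then show ?thesis using assms unfolding num_small_def by auto
qed

lemma small_count_split:
  assumes "c \<in> R" "finite R"
  shows "small_count R = (\<Sum>t\<in>tiles_covering R c.
           small_count (R - t) + of_bool (t \<in> range small_tile) * tiling_count (R - t))"
proof -
  have "small_count R =
      (\<Sum>(t, T)\<in>(SIGMA t:tiles_covering R c. tilings (R - t)). num_small (insert t T))"
    unfolding small_count_def
    using sum.reindex_bij_betw[OF bij_betw_insert_tiling[OF assms(1)], of num_small]
    by (simp add: case_prod_unfold)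
  also have "\<dots> = (\<Sum>t\<in>tiles_covering R c. \<Sum>T\<in>tilings (R - t). num_small (insert t T))"
    using assms finite_tiles_covering finite_tilings by (subst sum.Sigma) auto
  also have "\<dots> = (\<Sum>t\<in>tiles_covering R c. \<Sum>T\<in>tilings (R - t).
                     num_small T + of_bool (t \<in> range small_tile))"
  proof (intro sum.cong refl)
    fix t T
    assume "t \<in> tiles_covering R c" "T \<in> tilings (R - t)"
    moreover from this have "finite T" unfolding tilings_def is_tiling_def by auto
    ultimately show "num_small (insert t T) = num_small T + of_bool (t \<in> range small_tile)"
      using num_small_insert tile_notin_tiling_Diff unfolding tiles_covering_def by auto
  qed
  also have "\<dots> = (\<Sum>t\<in>tiles_covering R c.
                     small_count (R - t) + of_bool (t \<in> range small_tile) * tiling_count (R - t))"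
    unfolding small_count_def tiling_count_def by (simp add: sum.distrib mult.commute)
  finally show ?thesis .
qed

lemma counts_forced_small:
  assumes "c \<in> R" "finite R" "tiles_covering R c = {{c}}"
  shows "tiling_count R = tiling_count (R - {c})"
    and "small_count R = small_count (R - {c}) + tiling_count (R - {c})"
  using tiling_count_split[OF assms(1,2)] small_count_split[OF assms(1,2)]
  unfolding assms(3) by (simp_all add: small_tile_def)

lemma counts_two_choices:
  assumes "c \<in> R" "finite R" "tiles_covering R c = {{c}, L}" "L \<notin> range small_tile"
  shows "tiling_count R = tiling_count (R - {c}) + tiling_count (R - L)"
    and "small_count R = small_count (R - {c}) + tiling_count (R - {c}) + small_count (R - L)"
proof -
  have "{c} \<noteq> L" "{c} \<in> range small_tile"
    using assms(4) by (auto simp: small_tile_def)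
  then show "tiling_count R = tiling_count (R - {c}) + tiling_count (R - L)"
    and "small_count R = small_count (R - {c}) + tiling_count (R - {c}) + small_count (R - L)"
    using tiling_count_split[OF assms(1,2)] small_count_split[OF assms(1,2)] assms(4)
    unfolding assms(3) by simp_all
qed

lemma tiles_covering_singleton: "tiles_covering {c} c = {{c}}"
  using tiles_nonempty unfolding tiles_covering_def tiles_def small_tile_def by blast

lemma counts_singleton: "tiling_count {c} = 1" "small_count {c} = 1"
proof -
  have "tilings {} = {{}}"
    unfolding tilings_def is_tiling_def using tiles_nonempty by fastforce
  then show "tiling_count {c} = 1" "small_count {c} = 1"
    using counts_forced_small[OF _ _ tiles_covering_singleton]
    by (simp_all add: tiling_count_def small_count_def num_small_def)
qed

definition tiles_through :: "cell \<Rightarrow> cell set set" where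
  "tiles_through c = (case c of (a, b, u) \<Rightarrow>
     if u then {{c}, large_up a b, large_up (a-1) b, large_up a (b-1), large_down (a-1) (b-1)}
     else {{c}, large_up a b, large_down (a-1) b, large_down a (b-1), large_down (a-1) (b-1)})"

lemma mem_large_up:
  "(a, b, u) \<in> large_up a' b' \<longleftrightarrow>
     (if u then a' = a \<and> b' = b \<or> a' = a-1 \<and> b' = b \<or> a' = a \<and> b' = b-1 else a' = a \<and> b' = b)"
  by (cases u) (auto simp: large_up_def)

lemma mem_large_down:
  "(a, b, u) \<in> large_down a' b' \<longleftrightarrow>
     (if u then a' = a-1 \<and> b' = b-1 else a' = a-1 \<and> b' = b \<or> a' = a \<and> b' = b-1 \<or> a' = a-1 \<and> b' = b-1)"
  by (cases u) (auto simp: large_down_def)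

lemma tiles_containing_eq: "{t \<in> tiles. c \<in> t} = tiles_through c"
proof (intro set_eqI iffI)
  obtain a b u where c: "c = (a, b, u)" by (cases c)
  fix t
  assume "t \<in> {t \<in> tiles. c \<in> t}"
  then consider c' where "t = {c'}" "c \<in> t"
    | a' b' where "t = large_up a' b'" "c \<in> t"
    | a' b' where "t = large_down a' b'" "c \<in> t"
    unfolding tiles_def small_tile_def by blast
  then show "t \<in> tiles_through c"
    by cases (auto simp: c tiles_through_def mem_large_up mem_large_down split: if_splits)
next
  obtain a b u where c: "c = (a, b, u)" by (cases c)
  fix t
  assume "t \<in> tiles_through c"
  then show "t \<in> {t \<in> tiles. c \<in> t}"
    unfolding c tiles_through_def tiles_def small_tile_def
    by (cases u) (auto simp: mem_large_up mem_large_down)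
qed

lemma tiles_covering_eq: "tiles_covering R c = {t \<in> tiles_through c. t \<subseteq> R}"
  using tiles_containing_eq unfolding tiles_covering_def by blast

lemma Collect_mem_insert:
  "{x \<in> insert a A. P x} = (if P a then insert a {x \<in> A. P x} else {x \<in> A. P x})"
  by auto

lemmas tiles_covering_simps =
  tiles_covering_eq tiles_through_def prod.case if_True if_False Collect_mem_insert

lemma large_not_small: "large_up a b \<notin> range small_tile" "large_down a b \<notin> range small_tile"
  unfolding small_tile_def large_up_def large_down_def by (auto simp: insert_eq_iff)

text \<open>The strip with the first p cells of the lower row and the first q cells of the upper row,
  counted from the left. In the lower row (a,0,True) and (a,0,False) sit at positions 2a and 2a+1;
  the upper row starts one half-cell further left, with (a,1,True) and (a,1,False) at positions
  2a+1 and 2a+2. Thus H_n is strip (2n-1) (2n-1) and P_n is strip (2n-2) (2n-1).\<close>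

definition strip :: "int \<Rightarrow> int \<Rightarrow> cell set" where
  "strip p q = {(a, b, u).
     (b = 0 \<and> 0 \<le> (if u then 2*a else 2*a+1) \<and> (if u then 2*a else 2*a+1) < p)
   \<or> (b = 1 \<and> 0 \<le> (if u then 2*a+1 else 2*a+2) \<and> (if u then 2*a+1 else 2*a+2) < q)}"

lemma mem_strip [simp]:
  "(a, b, u) \<in> strip p q \<longleftrightarrow>
     (b = 0 \<and> 0 \<le> (if u then 2*a else 2*a+1) \<and> (if u then 2*a else 2*a+1) < p)
   \<or> (b = 1 \<and> 0 \<le> (if u then 2*a+1 else 2*a+2) \<and> (if u then 2*a+1 else 2*a+2) < q)"
  unfolding strip_def by simp

lemma finite_strip: "finite (strip p q)"
proof (rule finite_subset)
  show "strip p q \<subseteq> {-1..max p q} \<times> {0..1} \<times> UNIV"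
    by (auto split: if_splits)
qed simp

lemma cell_set_eqI:
  "(\<And>a b. ((a, b, True) \<in> A \<longleftrightarrow> (a, b, True) \<in> B) \<and> ((a, b, False) \<in> A \<longleftrightarrow> (a, b, False) \<in> B))
   \<Longrightarrow> A = B"
  by (rule set_eqI) (metis (full_types) prod_cases3)

lemma Hreg_eq_strip: "Hreg n = strip (2 * int n - 1) (2 * int n - 1)"
  by (rule cell_set_eqI) (simp add: Hreg_def; presburger)

lemma Preg_eq_strip: "Preg n = strip (2 * int n - 2) (2 * int n - 1)"
  by (rule cell_set_eqI) (simp add: Preg_def Hreg_def; presburger)

lemma counts_strip_even_even:
  assumes "n \<ge> 1"
  shows "tiling_count (strip (2*n) (2*n)) = tiling_count (strip (2*n-1) (2*n-1))"
    and "small_count (strip (2*n) (2*n)) =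
           small_count (strip (2*n-1) (2*n-1)) + 2 * tiling_count (strip (2*n-1) (2*n-1))"
proof -
  have "tiles_covering (strip (2*n) (2*n)) (n-1, 1, True) = {{(n-1, 1, True)}}"
    using assms unfolding tiles_covering_simps by (simp add: large_up_def large_down_def)
  moreover have "strip (2*n) (2*n) - {(n-1, 1, True)} = strip (2*n) (2*n-1)"
    using assms by (intro cell_set_eqI) (simp; presburger)
  moreover have "tiles_covering (strip (2*n) (2*n-1)) (n-1, 0, False) = {{(n-1, 0, False)}}"
    using assms unfolding tiles_covering_simps by (simp add: large_up_def large_down_def)
  moreover have "strip (2*n) (2*n-1) - {(n-1, 0, False)} = strip (2*n-1) (2*n-1)"
    using assms by (intro cell_set_eqI) (simp; presburger)
  ultimately show
    "tiling_count (strip (2*n) (2*n)) = tiling_count (strip (2*n-1) (2*n-1))"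
    "small_count (strip (2*n) (2*n)) =
       small_count (strip (2*n-1) (2*n-1)) + 2 * tiling_count (strip (2*n-1) (2*n-1))"
    using counts_forced_small[OF _ finite_strip, of "(n-1, 1, True)" "2*n" "2*n"]
      counts_forced_small[OF _ finite_strip, of "(n-1, 0, False)" "2*n" "2*n-1"] assms
    by simp_all
qed

lemma counts_strip_odd_even:
  assumes "n \<ge> 1"
  shows "tiling_count (strip (2*n+1) (2*n)) =
           tiling_count (strip (2*n) (2*n)) + tiling_count (strip (2*n-2) (2*n-1))"
    and "small_count (strip (2*n+1) (2*n)) =
           small_count (strip (2*n) (2*n)) + tiling_count (strip (2*n) (2*n))
           + small_count (strip (2*n-2) (2*n-1))"
proof -
  have "tiles_covering (strip (2*n+1) (2*n)) (n, 0, True) = {{(n, 0, True)}, large_up (n-1) 0}"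
    using assms unfolding tiles_covering_simps by (simp add: large_up_def large_down_def)
  moreover have "strip (2*n+1) (2*n) - {(n, 0, True)} = strip (2*n) (2*n)"
    using assms by (intro cell_set_eqI) (simp; presburger)
  moreover have "strip (2*n+1) (2*n) - large_up (n-1) 0 = strip (2*n-2) (2*n-1)"
    using assms by (intro cell_set_eqI) (simp add: large_up_def; presburger)
  ultimately show
    "tiling_count (strip (2*n+1) (2*n)) =
       tiling_count (strip (2*n) (2*n)) + tiling_count (strip (2*n-2) (2*n-1))"
    "small_count (strip (2*n+1) (2*n)) =
       small_count (strip (2*n) (2*n)) + tiling_count (strip (2*n) (2*n))
       + small_count (strip (2*n-2) (2*n-1))"
    using counts_two_choices[OF _ finite_strip _ large_not_small(1), of "(n, 0, True)" "2*n+1" "2*n"]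
      assms
    by simp_all
qed

lemma counts_strip_odd_odd:
  assumes "n \<ge> 1"
  shows "tiling_count (strip (2*n+1) (2*n+1)) =
           tiling_count (strip (2*n+1) (2*n)) + tiling_count (strip (2*n-1) (2*n-2))"
    and "small_count (strip (2*n+1) (2*n+1)) =
           small_count (strip (2*n+1) (2*n)) + tiling_count (strip (2*n+1) (2*n))
           + small_count (strip (2*n-1) (2*n-2)) + tiling_count (strip (2*n-1) (2*n-2))"
proof -
  define R where "R = strip (2*n+1) (2*n+1) - large_down (n-2) 0"
  have "(n, 0, True) \<in> R" "finite R"
    using assms finite_strip unfolding R_def by (simp_all add: large_down_def)
  moreover have "tiles_covering R (n, 0, True) = {{(n, 0, True)}}"
    using assms unfolding R_def tiles_covering_simps by (simp add: large_up_def large_down_def)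
  moreover have "R - {(n, 0, True)} = strip (2*n-1) (2*n-2)"
    using assms unfolding R_def by (intro cell_set_eqI) (simp add: large_down_def; presburger)
  ultimately have rest:
    "tiling_count R = tiling_count (strip (2*n-1) (2*n-2))"
    "small_count R = small_count (strip (2*n-1) (2*n-2)) + tiling_count (strip (2*n-1) (2*n-2))"
    using counts_forced_small[of "(n, 0, True)" R] by simp_all
  have "tiles_covering (strip (2*n+1) (2*n+1)) (n-1, 1, False) =
          {{(n-1, 1, False)}, large_down (n-2) 0}"
    using assms unfolding tiles_covering_simps
    by (simp add: large_up_def large_down_def insert_commute)
  moreover have "strip (2*n+1) (2*n+1) - {(n-1, 1, False)} = strip (2*n+1) (2*n)"
    using assms by (intro cell_set_eqI) (simp; presburger)
  ultimately show
    "tiling_count (strip (2*n+1) (2*n+1)) =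
       tiling_count (strip (2*n+1) (2*n)) + tiling_count (strip (2*n-1) (2*n-2))"
    "small_count (strip (2*n+1) (2*n+1)) =
       small_count (strip (2*n+1) (2*n)) + tiling_count (strip (2*n+1) (2*n))
       + small_count (strip (2*n-1) (2*n-2)) + tiling_count (strip (2*n-1) (2*n-2))"
    using counts_two_choices[OF _ finite_strip _ large_not_small(2),
        of "(n-1, 1, False)" "2*n+1" "2*n+1"] rest assms
    unfolding R_def by simp_all
qed

lemma counts_strip_even_odd:
  assumes "n \<ge> 1"
  shows "tiling_count (strip (2*n) (2*n+1)) =
           tiling_count (strip (2*n) (2*n)) + tiling_count (strip (2*n-1) (2*n-2))"
    and "small_count (strip (2*n) (2*n+1)) =
           small_count (strip (2*n) (2*n)) + tiling_count (strip (2*n) (2*n))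
           + small_count (strip (2*n-1) (2*n-2))"
proof -
  have "tiles_covering (strip (2*n) (2*n+1)) (n-1, 1, False) =
          {{(n-1, 1, False)}, large_down (n-2) 0}"
    using assms unfolding tiles_covering_simps
    by (simp add: large_up_def large_down_def insert_commute)
  moreover have "strip (2*n) (2*n+1) - {(n-1, 1, False)} = strip (2*n) (2*n)"
    using assms by (intro cell_set_eqI) (simp; presburger)
  moreover have "strip (2*n) (2*n+1) - large_down (n-2) 0 = strip (2*n-1) (2*n-2)"
    using assms by (intro cell_set_eqI) (simp add: large_down_def; presburger)
  ultimately show
    "tiling_count (strip (2*n) (2*n+1)) =
       tiling_count (strip (2*n) (2*n)) + tiling_count (strip (2*n-1) (2*n-2))"
    "small_count (strip (2*n) (2*n+1)) =
       small_count (strip (2*n) (2*n)) + tiling_count (strip (2*n) (2*n))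
       + small_count (strip (2*n-1) (2*n-2))"
    using counts_two_choices[OF _ finite_strip _ large_not_small(2),
        of "(n-1, 1, False)" "2*n" "2*n+1"] assms
    by simp_all
qed

lemma counts_smallest_strips:
  "tiling_count (strip 1 0) = 1" "small_count (strip 1 0) = 1"
  "tiling_count (strip 0 1) = 1" "small_count (strip 0 1) = 1"
  "tiling_count (strip 1 1) = 1" "small_count (strip 1 1) = 2"
proof -
  have single: "strip 1 0 = {(0, 0, True)}" "strip 0 1 = {(-1, 1, False)}"
    by (intro cell_set_eqI; simp; presburger)+
  then show "tiling_count (strip 1 0) = 1" "small_count (strip 1 0) = 1"
    "tiling_count (strip 0 1) = 1" "small_count (strip 0 1) = 1"
    by (simp_all add: counts_singleton)
  have "tiles_covering (strip 1 1) (-1, 1, False) = {{(-1, 1, False)}}"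
    unfolding tiles_covering_simps by (simp add: large_up_def large_down_def)
  moreover have "strip 1 1 - {(-1, 1, False)} = strip 1 0"
    by (intro cell_set_eqI) (simp; presburger)
  ultimately show "tiling_count (strip 1 1) = 1" "small_count (strip 1 1) = 2"
    using counts_forced_small[OF _ finite_strip, of "(-1, 1, False)" 1 1] single counts_singleton
    by simp_all
qed

text \<open>E_n = strip (2n+1) (2n) is H_(n+1) without its last upper cell. The counts are taken in
  int so that the recurrences can be rearranged with ring arithmetic.\<close>

definition h_count :: "int \<Rightarrow> int" where "h_count n = int (tiling_count (strip (2*n-1) (2*n-1)))"
definition h_small :: "int \<Rightarrow> int" where "h_small n = int (small_count (strip (2*n-1) (2*n-1)))"
definition p_count :: "int \<Rightarrow> int" where "p_count n = int (tiling_count (strip (2*n-2) (2*n-1)))"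
definition p_small :: "int \<Rightarrow> int" where "p_small n = int (small_count (strip (2*n-2) (2*n-1)))"
definition e_count :: "int \<Rightarrow> int" where "e_count n = int (tiling_count (strip (2*n+1) (2*n)))"
definition e_small :: "int \<Rightarrow> int" where "e_small n = int (small_count (strip (2*n+1) (2*n)))"

lemmas count_defs = h_count_def h_small_def p_count_def p_small_def e_count_def e_small_def

lemma e_recurrence:
  assumes "n \<ge> 1"
  shows "e_count n = h_count n + p_count n"
    and "e_small n = h_small n + 3 * h_count n + p_small n"
  using counts_strip_odd_even[OF assms] counts_strip_even_even[OF assms]
  unfolding count_defs by simp_all

lemma h_recurrence:
  assumes "n \<ge> 1"
  shows "h_count (n+1) = e_count n + e_count (n-1)"
    and "h_small (n+1) = e_small n + e_count n + e_small (n-1) + e_count (n-1)"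
proof -
  have idx: "2*(n+1)-1 = 2*n+1" "2*(n-1)+1 = 2*n-1" "2*(n-1) = 2*n-2" by simp_all
  show "h_count (n+1) = e_count n + e_count (n-1)"
    and "h_small (n+1) = e_small n + e_count n + e_small (n-1) + e_count (n-1)"
    unfolding count_defs idx using counts_strip_odd_odd[OF assms] by simp_all
qed

lemma p_recurrence:
  assumes "n \<ge> 1"
  shows "p_count (n+1) = h_count n + e_count (n-1)"
    and "p_small (n+1) = h_small n + 3 * h_count n + e_small (n-1)"
proof -
  have idx: "2*(n+1)-1 = 2*n+1" "2*(n+1)-2 = 2*n" "2*(n-1)+1 = 2*n-1" "2*(n-1) = 2*n-2"
    by simp_all
  show "p_count (n+1) = h_count n + e_count (n-1)"
    and "p_small (n+1) = h_small n + 3 * h_count n + e_small (n-1)"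
    unfolding count_defs idx
    using counts_strip_even_odd[OF assms] counts_strip_even_even[OF assms] by simp_all
qed

lemma closed_forms:
  assumes "n \<ge> 1"
  shows "e_count (n-1) = p_count n \<and> e_small (n-1) = (2*n-1) * e_count (n-1)
    \<and> h_small n = 2*(n-1) * h_count n + 2 * p_count n \<and> p_small n = (2*n-1) * p_count n"
  using assms
proof (induction n rule: int_ge_induct)
  case base
  show ?case using counts_smallest_strips unfolding count_defs by simp
next
  case (step n)
  then have "e_count (n-1) = p_count n" "e_small (n-1) = (2*n-1) * e_count (n-1)"
    "h_small n = 2*(n-1) * h_count n + 2 * p_count n" "p_small n = (2*n-1) * p_count n"
    by auto
  then show ?case
    using e_recurrence[OF step.hyps] h_recurrence[OF step.hyps] p_recurrence[OF step.hyps]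
    by (simp add: algebra_simps)
qed

theorem theorem6:
  fixes n :: nat
  assumes "n \<ge> 1"
  shows "phi n = 2 * (n - 1) * Hcount n + 2 * Pcount n \<and> theta n = (2 * n - 1) * Pcount n"
proof -
  have counts: "int (Hcount n) = h_count (int n)" "int (phi n) = h_small (int n)"
    "int (Pcount n) = p_count (int n)" "int (theta n) = p_small (int n)"
    unfolding Hcount_def phi_def Pcount_def theta_def count_defs Hreg_eq_strip Preg_eq_strip
      tiling_count_def small_count_def by simp_all
  have "int (phi n) = int (2 * (n - 1) * Hcount n + 2 * Pcount n)"
    and "int (theta n) = int ((2 * n - 1) * Pcount n)"
    using closed_forms[of "int n"] assms by (simp_all add: counts of_nat_diff)
  then show ?thesis by (simp only: of_nat_eq_iff)
qed

end
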